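(* Every $LS$-sequence of points $(\xi_{L,S}^n)_{n\in\mathbb{N}}$ does not have Poissonian pair correlations.
   Context: $\|x\|$ denotes the distance from $x$ to the nearest integer. A sequence $(x_n)_{n\in\mathbb{N}}$ in $[0,1)$ has Poissonian pair correlations if for every $s \geq 0$, $F_N(s) := \frac{1}{N}\#\{1 \leq l \neq m \leq N : \|x_l - x_m\| \leq s/N\} \to 2s$ as $N\to\infty$. $LS$-sequences: Let $L\in\mathbb{N}$, $S\in\mathbb{N}_0$ with $L+S\ge 2$, and let $\beta\in(0,1)$ be the solution of $L\beta+S\beta^2=1$. Let $\rho_{L,S}$ be the partition of $[0,1)$ into $L+S$ consecutive intervals, the first $L$ of length $\beta$ and the following $S$ of length $\beta^2$. For a partition $\pi$ of $[0,1)$, its $\rho$-refinement $\rho\pi$ is obtained by subdividing every interval of maximal length of $\pi$ positively homothetically to $\rho$. The $LS$-sequence of partitions is $(\rho_{L,S}^n\pi)_{n\in\mathbb{N}}$ with $\pi=\{[0,1)\}$; the partition $\rho_{L,S}^n\pi$ consists of $t_n$ intervals, of which $l_n$ have the maximal length $\beta^n$ (the rest have length $\beta^{n+1}$). The $LS$-sequence of points is defined as follows: $\Lambda^1_{L,S}$ is the list of the $t_1$ left endpoints of $\rho_{L,S}\pi$ ordered by magnitude. Given $\Lambda^n_{L,S}=\{\xi^1_{L,S},\ldots,\xi^{t_n}_{L,S}\}$ (ordered), the ordered list $\Lambda^{n+1}_{L,S}$ is $\xi^1,\ldots,\xi^{t_n}$, followed by $\psi^{n+1}_{1,0}(\xi^1),\ldots,\psi^{n+1}_{1,0}(\xi^{l_n}),\ldots,\psi^{n+1}_{L,0}(\xi^1),\ldots,\psi^{n+1}_{L,0}(\xi^{l_n})$,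 followed by $\psi^{n+1}_{L,1}(\xi^1),\ldots,\psi^{n+1}_{L,1}(\xi^{l_n}),\ldots,\psi^{n+1}_{L,S-1}(\xi^1),\ldots,\psi^{n+1}_{L,S-1}(\xi^{l_n})$, where $\psi^n_{i,j}(x)=x+i\beta^n+j\beta^{n+1}$. The $LS$-sequence of points $(\xi^n_{L,S})_{n\in\mathbb{N}}$ is the sequence whose first $t_n$ terms are $\Lambda^n_{L,S}$ for every $n$. (For $S=0$, $L=b$ one obtains the van der Corput sequence in base $b$.) *)

theory Defs
  imports Complex_Main
begin

definition dist_int :: "real \<Rightarrow> real" where
  "dist_int x = \<bar>x - of_int (round x)\<bar>"

definition pair_corr :: "(nat \<Rightarrow> real) \<Rightarrow> nat \<Rightarrow> real \<Rightarrow> real" where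
  "pair_corr x N s = (1 / real N) *
     real (card {(l, m). l \<in> {1..N} \<and> m \<in> {1..N} \<and> l \<noteq> m \<and>
                         dist_int (x l - x m) \<le> s / real N})"

definition poissonian_pc :: "(nat \<Rightarrow> real) \<Rightarrow> bool" where
  "poissonian_pc x \<longleftrightarrow> (\<forall>s::real. s \<ge> 0 \<longrightarrow> (\<lambda>N. pair_corr x N s) \<longlonglongrightarrow> 2 * s)"

definition LS_beta :: "nat \<Rightarrow> nat \<Rightarrow> real" where
  "LS_beta L S = (THE b. 0 < b \<and> b < 1 \<and> real L * b + real S * b ^ 2 = 1)"

text \<open>(t_n, l_n): number of intervals of the n-th partition and number of those of maximal length.\<close>
fun LS_tl :: "nat \<Rightarrow> nat \<Rightarrow> nat \<Rightarrow> nat \<times> nat" where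
  "LS_tl L S 0 = (1, 1)"
| "LS_tl L S (Suc n) = (let (t, l) = LS_tl L S n in (t + (L + S - 1) * l, L * l + (t - l)))"

definition LS_t :: "nat \<Rightarrow> nat \<Rightarrow> nat \<Rightarrow> nat" where
  "LS_t L S n = fst (LS_tl L S n)"

definition LS_l :: "nat \<Rightarrow> nat \<Rightarrow> nat \<Rightarrow> nat" where
  "LS_l L S n = snd (LS_tl L S n)"

text \<open>Offset of the k-th new left endpoint (k = 1..L+S-1) inside a maximal interval of
  the n-th partition: psi^{n+1}_{k,0} for k \<le> L, psi^{n+1}_{L,k-L} for k > L.\<close>
definition LS_offset :: "nat \<Rightarrow> nat \<Rightarrow> nat \<Rightarrow> nat \<Rightarrow> real" where
  "LS_offset L S n k =
     (let b = LS_beta L S in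
      if k \<le> L then real k * b ^ (n + 1)
      else real L * b ^ (n + 1) + real (k - L) * b ^ (n + 2))"

fun LS_Lambda :: "nat \<Rightarrow> nat \<Rightarrow> nat \<Rightarrow> real list" where
  "LS_Lambda L S 0 = [0]"
| "LS_Lambda L S (Suc n) =
     (let xs = LS_Lambda L S n in
      xs @ concat (map (\<lambda>k. map (\<lambda>x. x + LS_offset L S n k) (take (LS_l L S n) xs))
                       [1..<L + S]))"

text \<open>The LS-sequence of points, indexed from 1: the m-th point is the m-th entry of
  Lambda^m (which has t_m > m entries and is a prefix of all later Lambda^n).\<close>
definition LS_point :: "nat \<Rightarrow> nat \<Rightarrow> nat \<Rightarrow> real" where
  "LS_point L S m = LS_Lambda L S m ! (m - 1)"

end

theory Submission
  imports Defs
begin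

text \<open>At time N = t_n the first N points are the left endpoints of the intervals of the
  n-th partition; these intervals are pairwise disjoint and have length at least beta^(n+1),
  so distinct points are at distance at least beta^(n+1) modulo 1. Since t_n beta^n \<ge> 1,
  the radius beta / (2 N) is smaller than that, so F_N(beta/2) = 0 along the subsequence
  N = t_n, whereas Poissonian pair correlations would force F_N(beta/2) \<rightarrow> beta > 0.\<close>

lemma dist_int_ge:
  assumes "a \<le> \<bar>d\<bar>" and "\<bar>d\<bar> \<le> 1 - a"
  shows "a \<le> dist_int d"
proof (cases "round d = 0")
  case False
  then have "1 \<le> \<bar>real_of_int (round d)\<bar>" by linarith
  then show ?thesis using assms by (simp add: dist_int_def)
qed (use assms in \<open>simp add: dist_int_def\<close>)

lemma pair_corr_eq_0:
  assumes "\<And>l m. l \<in> {1..N} \<Longrightarrow> m \<in> {1..N} \<Longrightarrow> l \<noteq> m \<Longrightarrow> s / real N < dist_int (x l - x m)"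
  shows "pair_corr x N s = 0"
proof -
  have "{(l, m). l \<in> {1..N} \<and> m \<in> {1..N} \<and> l \<noteq> m \<and> dist_int (x l - x m) \<le> s / real N} = {}"
    using assms by force
  then show ?thesis by (simp only: pair_corr_def card.empty of_nat_0 mult_zero_right)
qed

lemma not_poissonian_pc_if_pair_corr_vanishes:
  fixes r :: "nat \<Rightarrow> nat"
  assumes "strict_mono r" and "s > 0" and "\<And>n. pair_corr x (r n) s = 0"
  shows "\<not> poissonian_pc x"
proof
  assume "poissonian_pc x"
  then have "(\<lambda>N. pair_corr x N s) \<longlonglongrightarrow> 2 * s"
    using \<open>s > 0\<close> by (simp add: poissonian_pc_def)
  from LIMSEQ_subseq_LIMSEQ[OF this \<open>strict_mono r\<close>]
  have "(\<lambda>n. 0) \<longlonglongrightarrow> 2 * s" using assms(3) by (simp add: o_def)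
  then show False using \<open>s > 0\<close> LIMSEQ_unique[OF tendsto_const] by fastforce
qed

lemma distinct_if_sorted_wrt_irrefl:
  "sorted_wrt R xs \<Longrightarrow> (\<And>x. x \<in> set xs \<Longrightarrow> \<not> R x x) \<Longrightarrow> distinct xs"
  by (induction xs) auto

lemma sorted_wrt_sym_imp_rel:
  assumes "sorted_wrt R xs" and "\<And>x y. R x y \<Longrightarrow> R y x"
    and "x \<in> set xs" and "y \<in> set xs" and "x \<noteq> y"
  shows "R x y"
  using assms by (induction xs) auto

lemma sorted_wrt_neq_if_distinct: "distinct xs \<Longrightarrow> sorted_wrt (\<noteq>) xs"
  by (induction xs) auto

lemma product_append: "List.product (xs @ ys) zs = List.product xs zs @ List.product ys zs"
  by (induction xs) simp_all

text \<open>A pair (a, h) stands for the interval [a, a + h).\<close>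
definition nonoverlapping :: "real \<times> real \<Rightarrow> real \<times> real \<Rightarrow> bool" where
  "nonoverlapping p q \<longleftrightarrow> fst p + snd p \<le> fst q \<or> fst q + snd q \<le> fst p"

lemma nonoverlapping_sym: "nonoverlapping p q \<Longrightarrow> nonoverlapping q p"
  by (auto simp: nonoverlapping_def)

lemma dist_int_ge_if_nonoverlapping:
  assumes "nonoverlapping p q"
    and "0 \<le> fst p" "fst p + snd p \<le> 1" "0 \<le> fst q" "fst q + snd q \<le> 1"
    and "h \<le> snd p" "h \<le> snd q"
  shows "h \<le> dist_int (fst p - fst q)"
  using assms by (intro dist_int_ge) (auto simp: nonoverlapping_def abs_if)

lemma LS_beta:
  fixes L S :: nat
  assumes "L \<ge> 1" and "L + S \<ge> 2"
  shows "0 < LS_beta L S" and "LS_beta L S < 1"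
    and "real L * LS_beta L S + real S * LS_beta L S ^ 2 = 1"
proof -
  define f where "f b = real L * b + real S * b ^ 2" for b :: real
  have f_less: "f x < f y" if "0 \<le> x" "x < y" for x y
  proof -
    have "real L * x < real L * y" using that assms(1) by simp
    moreover have "real S * x ^ 2 \<le> real S * y ^ 2"
      using that by (intro mult_left_mono power_mono) auto
    ultimately show ?thesis by (simp add: f_def)
  qed
  have "\<forall>x. 0 \<le> x \<and> x \<le> 1 \<longrightarrow> isCont f x"
    unfolding f_def by (intro allI impI continuous_intros)
  then obtain x where x: "0 \<le> x" "x \<le> 1" "f x = 1"
    using IVT[of f 0 1 1] assms by (auto simp: f_def)
  have "f 1 \<noteq> 1" using assms by (simp add: f_def)
  with x have x_mem: "0 < x \<and> x < 1 \<and> f x = 1"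
    by (cases "x = 0"; cases "x = 1") (auto simp: f_def)
  have "LS_beta L S = x"
    unfolding LS_beta_def f_def[symmetric]
  proof (rule the_equality)
    fix y assume "0 < y \<and> y < 1 \<and> f y = 1"
    then show "y = x"
      using x_mem f_less[of y x] f_less[of x y] by (cases y x rule: linorder_cases) auto
  qed (fact x_mem)
  then show "0 < LS_beta L S" "LS_beta L S < 1" "real L * LS_beta L S + real S * LS_beta L S ^ 2 = 1"
    using x_mem by (simp_all add: f_def)
qed

lemma LS_t_0 [simp]: "LS_t L S 0 = 1" and LS_l_0 [simp]: "LS_l L S 0 = 1"
  by (simp_all add: LS_t_def LS_l_def)

lemma LS_t_Suc [simp]: "LS_t L S (Suc n) = LS_t L S n + (L + S - 1) * LS_l L S n"
  and LS_l_Suc [simp]: "LS_l L S (Suc n) = L * LS_l L S n + (LS_t L S n - LS_l L S n)"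
  by (simp_all add: LS_t_def LS_l_def split: prod.split)

lemma LS_l_bounds:
  assumes "L \<ge> 1"
  shows "1 \<le> LS_l L S n" and "LS_l L S n \<le> LS_t L S n"
proof -
  have "1 \<le> LS_l L S n \<and> LS_l L S n \<le> LS_t L S n"
  proof (induction n)
    case (Suc n)
    define l where "l = LS_l L S n"
    have "L * l = l + (L - 1) * l" using assms by (cases L) simp_all
    moreover have "(L - 1) * l \<le> (L + S - 1) * l" by (intro mult_le_mono1) simp
    ultimately show ?case using Suc by (simp add: l_def[symmetric])
  qed simp
  then show "1 \<le> LS_l L S n" "LS_l L S n \<le> LS_t L S n" by simp_all
qed

lemma LS_t_less_Suc:
  assumes "L \<ge> 1" and "L + S \<ge> 2"
  shows "LS_t L S n < LS_t L S (Suc n)"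
proof -
  have "1 \<le> L + S - 1" using assms(2) by simp
  then have "1 * 1 \<le> (L + S - 1) * LS_l L S n"
    using LS_l_bounds(1)[OF assms(1)] by (intro mult_le_mono) auto
  then show ?thesis unfolding LS_t_Suc by linarith
qed

lemma strict_mono_LS_t:
  assumes "L \<ge> 1" and "L + S \<ge> 2"
  shows "strict_mono (LS_t L S)"
  using LS_t_less_Suc[OF assms] by (simp add: strict_mono_Suc_iff)

lemma LS_t_ge:
  assumes "L \<ge> 1" and "L + S \<ge> 2"
  shows "n + 1 \<le> LS_t L S n"
proof (induction n)
  case (Suc n)
  then show ?case using LS_t_less_Suc[OF assms, of n] by linarith
qed simp

lemma LS_t_Suc_minus_LS_l_Suc:
  assumes "L \<ge> 1"
  shows "LS_t L S (Suc n) - LS_l L S (Suc n) = S * LS_l L S n"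
proof -
  define t l where "t = LS_t L S n" and "l = LS_l L S n"
  have "l \<le> t" using LS_l_bounds(2)[OF assms] by (simp add: t_def l_def)
  moreover have "L * l = l + (L - 1) * l" and "(L + S - 1) * l = (L - 1) * l + S * l"
    using assms by (simp_all add: algebra_simps diff_mult_distrib)
  ultimately show ?thesis by (simp add: t_def[symmetric] l_def[symmetric])
qed

text \<open>The left-hand side is the total length of the n-th partition.\<close>
lemma LS_total_length:
  assumes "L \<ge> 1" and "L + S \<ge> 2"
  shows "real (LS_l L S n) * LS_beta L S ^ n
           + real (LS_t L S n - LS_l L S n) * LS_beta L S ^ (n + 1) = 1"
proof (induction n)
  case (Suc n)
  define b t l where "b = LS_beta L S" and "t = LS_t L S n" and "l = LS_l L S n"
  have "l \<le> t" using LS_l_bounds(2)[OF assms(1)] by (simp add: t_def l_def)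
  have short: "LS_t L S (Suc n) - LS_l L S (Suc n) = S * l"
    using LS_t_Suc_minus_LS_l_Suc[OF assms(1)] by (simp add: l_def)
  have "real (LS_l L S (Suc n)) * b ^ Suc n
          + real (LS_t L S (Suc n) - LS_l L S (Suc n)) * b ^ (Suc n + 1)
        = real (t - l) * b ^ (n + 1) + real l * b ^ n * (real L * b + real S * b ^ 2)"
    unfolding short using \<open>l \<le> t\<close>
    by (simp add: t_def l_def algebra_simps power2_eq_square of_nat_diff)
  also have "\<dots> = 1"
    using Suc LS_beta(3)[OF assms] by (simp add: b_def t_def l_def algebra_simps)
  finally show ?case by (simp only: b_def)
qed simp

lemma LS_t_mult_power_ge_1:
  assumes "L \<ge> 1" and "L + S \<ge> 2"
  shows "1 \<le> real (LS_t L S n) * LS_beta L S ^ n"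
proof -
  define b where "b = LS_beta L S"
  have "b ^ (n + 1) \<le> b ^ n"
    using LS_beta[OF assms] by (simp add: b_def power_decreasing)
  then have "real (LS_t L S n - LS_l L S n) * b ^ (n + 1) \<le> real (LS_t L S n - LS_l L S n) * b ^ n"
    by (simp add: mult_left_mono)
  then show ?thesis
    using LS_total_length[OF assms, of n] LS_l_bounds(2)[OF assms(1), of S n]
    by (simp add: b_def of_nat_diff algebra_simps)
qed

lemma LS_Lambda_prefix: "\<exists>ys. LS_Lambda L S (m + d) = LS_Lambda L S m @ ys"
  by (induction d) (auto simp: Let_def)

lemma LS_Lambda_nth_eq:
  assumes "i < length (LS_Lambda L S m)" and "i < length (LS_Lambda L S n)"
  shows "LS_Lambda L S m ! i = LS_Lambda L S n ! i"
proof -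
  have "LS_Lambda L S m ! i = LS_Lambda L S n ! i" if "m \<le> n" "i < length (LS_Lambda L S m)" for m n
  proof -
    obtain ys where "LS_Lambda L S n = LS_Lambda L S m @ ys"
      using LS_Lambda_prefix[of L S m "n - m"] \<open>m \<le> n\<close> by auto
    then show ?thesis using that by (simp add: nth_append)
  qed
  then show ?thesis using assms by (metis nat_le_linear)
qed

definition LS_sublength :: "nat \<Rightarrow> nat \<Rightarrow> nat \<Rightarrow> nat \<Rightarrow> real" where
  "LS_sublength L S n k = (if k < L then LS_beta L S ^ (n + 1) else LS_beta L S ^ (n + 2))"

text \<open>The k-th piece, k < L + S, of the splitting of an interval of length beta^n.\<close>
definition LS_subinterval :: "nat \<Rightarrow> nat \<Rightarrow> nat \<Rightarrow> nat \<Rightarrow> real \<times> real \<Rightarrow> real \<times> real" where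
  "LS_subinterval L S n k p = (fst p + LS_offset L S n k, LS_sublength L S n k)"

lemma LS_offset_0 [simp]: "LS_offset L S n 0 = 0"
  by (simp add: LS_offset_def Let_def)

lemma LS_offset_nonneg: "0 \<le> LS_beta L S \<Longrightarrow> 0 \<le> LS_offset L S n k"
  by (auto simp: LS_offset_def Let_def)

lemma LS_offset_sublength_le:
  assumes "k < k'" and "0 \<le> LS_beta L S"
  shows "LS_offset L S n k + LS_sublength L S n k \<le> LS_offset L S n k'"
proof -
  define b where "b = LS_beta L S"
  have b: "0 \<le> b ^ (n + 1)" "0 \<le> b ^ (n + 2)" using assms(2) by (simp_all add: b_def)
  consider "k' \<le> L" | "k < L" "L < k'" | "L \<le> k" "L < k'" using assms(1) by linarith
  then show ?thesis
  proof cases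
    case 1
    have "(real k + 1) * b ^ (n + 1) \<le> real k' * b ^ (n + 1)"
      using assms(1) b by (intro mult_right_mono) auto
    then show ?thesis using 1 assms(1)
      by (simp add: LS_offset_def LS_sublength_def Let_def b_def[symmetric] algebra_simps)
  next
    case 2
    have "(real k + 1) * b ^ (n + 1) \<le> real L * b ^ (n + 1)"
      using 2 b by (intro mult_right_mono) auto
    moreover have "0 \<le> real (k' - L) * b ^ (n + 2)" using b by simp
    ultimately show ?thesis using 2
      by (simp add: LS_offset_def LS_sublength_def Let_def b_def[symmetric] algebra_simps)
  next
    case 3
    have "(real (k - L) + 1) * b ^ (n + 2) \<le> real (k' - L) * b ^ (n + 2)"
      using 3 assms(1) b by (intro mult_right_mono) auto
    then show ?thesis using 3
      by (cases "k = L") (simp_all add: LS_offset_def LS_sublength_def Let_def b_def[symmetric] algebra_simps)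
  qed
qed

lemma LS_offset_sublength_le_power:
  assumes "L \<ge> 1" and "L + S \<ge> 2" and "k < L + S"
  shows "LS_offset L S n k + LS_sublength L S n k \<le> LS_beta L S ^ n"
proof -
  define b where "b = LS_beta L S"
  have "LS_offset L S n k + LS_sublength L S n k \<le> LS_offset L S n (L + S)"
    using LS_offset_sublength_le[OF assms(3)] LS_beta(1)[OF assms(1,2)] by simp
  also have "LS_offset L S n (L + S) = b ^ n * (real L * b + real S * b ^ 2)"
    by (cases "S = 0") (auto simp: LS_offset_def Let_def b_def algebra_simps power2_eq_square)
  also have "\<dots> = b ^ n" using LS_beta(3)[OF assms(1,2)] by (simp add: b_def)
  finally show ?thesis by (simp add: b_def)
qed

lemma LS_subinterval_subset:
  assumes "L \<ge> 1" and "L + S \<ge> 2" and "k < L + S"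
    and "snd p = LS_beta L S ^ n \<or> k = 0 \<and> snd p = LS_beta L S ^ (n + 1)"
  shows "fst p \<le> fst (LS_subinterval L S n k p)"
    and "fst (LS_subinterval L S n k p) + snd (LS_subinterval L S n k p) \<le> fst p + snd p"
  using assms LS_offset_sublength_le_power[OF assms(1-3), of n]
    LS_offset_nonneg[of L S n k] LS_beta(1)[OF assms(1,2)]
  by (auto simp: LS_subinterval_def LS_sublength_def)

lemma nonoverlapping_subintervals:
  assumes L: "L \<ge> 1" "L + S \<ge> 2"
    and kp: "k < L + S" "snd p = LS_beta L S ^ n \<or> k = 0 \<and> snd p = LS_beta L S ^ (n + 1)"
    and kq: "k' < L + S" "snd q = LS_beta L S ^ n \<or> k' = 0 \<and> snd q = LS_beta L S ^ (n + 1)"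
    and "p = q \<or> nonoverlapping p q" and "(k, p) \<noteq> (k', q)"
  shows "nonoverlapping (LS_subinterval L S n k p) (LS_subinterval L S n k' q)"
proof (cases "p = q")
  case True
  with assms have "k < k' \<or> k' < k" by auto
  then show ?thesis
    using True LS_offset_sublength_le[of _ _ L S n] LS_beta(1)[OF L]
    by (auto simp: nonoverlapping_def LS_subinterval_def)
next
  case False
  then show ?thesis
    using assms LS_subinterval_subset[OF L kp] LS_subinterval_subset[OF L kq]
    unfolding nonoverlapping_def by linarith
qed

text \<open>The intervals of the n-th partition, listed so that their left endpoints form
  Lambda^n: A holds the l_n intervals of maximal length, B the others. Only their
  disjointness is recorded, not that they cover [0, 1).\<close>
definition LS_partition ::
    "nat \<Rightarrow> nat \<Rightarrow> nat \<Rightarrow> (real \<times> real) list \<Rightarrow> (real \<times> real) list \<Rightarrow> bool" where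
  "LS_partition L S n A B \<longleftrightarrow>
     (\<forall>p\<in>set A. snd p = LS_beta L S ^ n) \<and>
     (\<forall>p\<in>set B. snd p = LS_beta L S ^ (n + 1)) \<and>
     (\<forall>p\<in>set (A @ B). 0 \<le> fst p \<and> fst p + snd p \<le> 1) \<and>
     sorted_wrt nonoverlapping (A @ B) \<and>
     length A = LS_l L S n \<and> length B = LS_t L S n - LS_l L S n \<and>
     map fst (A @ B) = LS_Lambda L S n"

text \<open>The pairs (k, p) standing for the k-th piece of p in the refined partition:
  the short intervals are carried over unchanged as their own 0-th piece.\<close>
definition LS_pieces :: "nat \<Rightarrow> nat \<Rightarrow> (real \<times> real) list \<Rightarrow> (real \<times> real) list \<Rightarrow>
    (nat \<times> (real \<times> real)) list" where
  "LS_pieces L S A B = map (Pair 0) (A @ B) @ List.product [1..<L + S] A"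

lemma sorted_wrt_nonoverlapping_refinement:
  assumes L: "L \<ge> 1" "L + S \<ge> 2" and P: "LS_partition L S n A B"
  shows "sorted_wrt nonoverlapping
           (map (\<lambda>(k, p). LS_subinterval L S n k p) (LS_pieces L S A B))"
proof -
  have b: "0 < LS_beta L S ^ n" "0 < LS_beta L S ^ (n + 1)" using LS_beta(1)[OF L] by simp_all
  have lengths: "\<forall>p\<in>set A. snd p = LS_beta L S ^ n" "\<forall>p\<in>set B. snd p = LS_beta L S ^ (n + 1)"
    and sorted: "sorted_wrt nonoverlapping (A @ B)"
    using P by (simp_all add: LS_partition_def)
  have "\<not> nonoverlapping p p" if "p \<in> set (A @ B)" for p
    using that lengths b by (auto simp: nonoverlapping_def simp del: power_Suc)
  then have "distinct (A @ B)" using distinct_if_sorted_wrt_irrefl[OF sorted] by blast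
  then have distinct_pieces: "distinct (LS_pieces L S A B)"
    by (auto simp: LS_pieces_def distinct_map distinct_product inj_on_def)
  have piece: "p \<in> set (A @ B) \<and> k < L + S \<and>
      (snd p = LS_beta L S ^ n \<or> k = 0 \<and> snd p = LS_beta L S ^ (n + 1))"
    if "(k, p) \<in> set (LS_pieces L S A B)" for k p
    using that lengths L by (auto simp: LS_pieces_def)
  have disjoint: "nonoverlapping (LS_subinterval L S n k p) (LS_subinterval L S n k' q)"
    if "(k, p) \<in> set (LS_pieces L S A B)" "(k', q) \<in> set (LS_pieces L S A B)"
      "(k, p) \<noteq> (k', q)" for k p k' q
  proof (rule nonoverlapping_subintervals[OF L])
    show "p = q \<or> nonoverlapping p q"
      using sorted_wrt_sym_imp_rel[OF sorted nonoverlapping_sym] piece that by blast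
  qed (use piece that in blast)+
  show ?thesis
    unfolding sorted_wrt_map
  proof (rule sorted_wrt_mono_rel[OF _ sorted_wrt_neq_if_distinct[OF distinct_pieces]])
    fix x y
    assume "x \<in> set (LS_pieces L S A B)" "y \<in> set (LS_pieces L S A B)" "x \<noteq> y"
    then show "nonoverlapping (case x of (k, p) \<Rightarrow> LS_subinterval L S n k p)
        (case y of (k, p) \<Rightarrow> LS_subinterval L S n k p)"
      using disjoint[of "fst x" "snd x" "fst y" "snd y"] by (simp add: case_prod_beta)
  qed
qed

lemma LS_partition_0: "LS_partition L S 0 [(0, 1)] []"
  by (simp add: LS_partition_def)

lemma LS_partition_Suc:
  assumes L: "L \<ge> 1" "L + S \<ge> 2" and P: "LS_partition L S n A B"
  shows "\<exists>A' B'. LS_partition L S (Suc n) A' B'"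
proof -
  let ?sub = "\<lambda>(k, p). LS_subinterval L S n k p"
  define A' where "A' = map ?sub (map (Pair 0) (A @ B) @ List.product [1..<L] A)"
  define B' where "B' = map ?sub (List.product [L..<L + S] A)"
  have upt_split: "[1..<L + S] = [1..<L] @ [L..<L + S]"
    using upt_add_eq_append[of 1 L S] L by simp
  have pieces: "A' @ B' = map ?sub (LS_pieces L S A B)"
    unfolding A'_def B'_def LS_pieces_def upt_split by (simp add: product_append)
  have lengths: "\<forall>p\<in>set A. snd p = LS_beta L S ^ n" "\<forall>p\<in>set B. snd p = LS_beta L S ^ (n + 1)"
    and bounds: "\<forall>p\<in>set (A @ B). 0 \<le> fst p \<and> fst p + snd p \<le> 1"
    and length: "length A = LS_l L S n" "length B = LS_t L S n - LS_l L S n"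
    and Lambda: "map fst (A @ B) = LS_Lambda L S n"
    using P by (simp_all add: LS_partition_def)
  have "\<forall>q\<in>set A'. snd q = LS_beta L S ^ Suc n"
    using L by (auto simp: A'_def LS_subinterval_def LS_sublength_def)
  moreover have "\<forall>q\<in>set B'. snd q = LS_beta L S ^ (Suc n + 1)"
    by (auto simp: B'_def LS_subinterval_def LS_sublength_def)
  moreover have "\<forall>q\<in>set (A' @ B'). 0 \<le> fst q \<and> fst q + snd q \<le> 1"
  proof
    fix q assume "q \<in> set (A' @ B')"
    then obtain k p where q: "q = LS_subinterval L S n k p" and p: "p \<in> set (A @ B)"
      and k: "k < L + S" "snd p = LS_beta L S ^ n \<or> k = 0 \<and> snd p = LS_beta L S ^ (n + 1)"
      unfolding pieces using lengths L by (auto simp: LS_pieces_def)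
    show "0 \<le> fst q \<and> fst q + snd q \<le> 1"
      using LS_subinterval_subset[OF L k] bounds p unfolding q by fastforce
  qed
  moreover have "sorted_wrt nonoverlapping (A' @ B')"
    unfolding pieces by (rule sorted_wrt_nonoverlapping_refinement[OF L P])
  moreover have "length A' = LS_l L S (Suc n)"
  proof -
    have "L * LS_l L S n = LS_l L S n + (L - 1) * LS_l L S n" using L(1) by (cases L) simp_all
    then show ?thesis using length LS_l_bounds(2)[OF L(1), of S n] by (simp add: A'_def)
  qed
  moreover have "length B' = LS_t L S (Suc n) - LS_l L S (Suc n)"
    unfolding LS_t_Suc_minus_LS_l_Suc[OF L(1)] using length by (simp add: B'_def)
  moreover have "map fst (A' @ B') = LS_Lambda L S (Suc n)"
    unfolding pieces LS_pieces_def using Lambda[symmetric] length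
    by (simp add: Let_def product_concat_map map_concat o_def LS_subinterval_def)
  ultimately show ?thesis unfolding LS_partition_def by blast
qed

lemma LS_partition_exists:
  assumes "L \<ge> 1" and "L + S \<ge> 2"
  shows "\<exists>A B. LS_partition L S n A B"
proof (induction n)
  case 0
  show ?case using LS_partition_0 by blast
next
  case (Suc n)
  then show ?case using LS_partition_Suc[OF assms] by blast
qed

lemma length_LS_Lambda:
  assumes "L \<ge> 1" and "L + S \<ge> 2"
  shows "length (LS_Lambda L S n) = LS_t L S n"
proof -
  obtain A B where "LS_partition L S n A B" using LS_partition_exists[OF assms] by blast
  then show ?thesis
    using LS_l_bounds(2)[OF assms(1), of S n] unfolding LS_partition_def
    by (metis length_append length_map le_add_diff_inverse)
qed

lemma LS_Lambda_separated:
  assumes L: "L \<ge> 1" "L + S \<ge> 2"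
    and "i < LS_t L S n" and "j < LS_t L S n" and "i \<noteq> j"
  shows "LS_beta L S ^ (n + 1) \<le> dist_int (LS_Lambda L S n ! i - LS_Lambda L S n ! j)"
proof -
  obtain A B where P: "LS_partition L S n A B" using LS_partition_exists[OF L] by blast
  define J where "J = A @ B"
  have Lambda: "LS_Lambda L S n = map fst J" and sorted: "sorted_wrt nonoverlapping J"
    and bounds: "\<forall>p\<in>set J. 0 \<le> fst p \<and> fst p + snd p \<le> 1"
    using P by (simp_all add: LS_partition_def J_def)
  have ij: "i < length J" "j < length J"
    using assms length_LS_Lambda[OF L, of n] by (simp_all add: Lambda)
  have "LS_beta L S ^ (n + 1) \<le> LS_beta L S ^ n"
    using LS_beta(1,2)[OF L] by (simp add: power_decreasing)
  then have short: "\<forall>p\<in>set J. LS_beta L S ^ (n + 1) \<le> snd p"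
    using P by (auto simp: LS_partition_def J_def)
  have "nonoverlapping (J ! i) (J ! j)"
    using sorted_wrt_nth_less[OF sorted] nonoverlapping_sym ij \<open>i \<noteq> j\<close>
    by (cases i j rule: linorder_cases) auto
  then show ?thesis
    using bounds short ij nth_mem[of i J] nth_mem[of j J]
    by (simp add: Lambda dist_int_ge_if_nonoverlapping)
qed

lemma LS_point_eq_nth_LS_Lambda:
  assumes L: "L \<ge> 1" "L + S \<ge> 2" and "1 \<le> m" and "m \<le> LS_t L S n"
  shows "LS_point L S m = LS_Lambda L S n ! (m - 1)"
  unfolding LS_point_def
  using assms LS_t_ge[OF L, of m]
  by (intro LS_Lambda_nth_eq) (simp_all add: length_LS_Lambda[OF L])

lemma pair_corr_LS_point_LS_t:
  assumes L: "L \<ge> 1" "L + S \<ge> 2"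
  shows "pair_corr (LS_point L S) (LS_t L S n) (LS_beta L S / 2) = 0"
proof (rule pair_corr_eq_0)
  define b t where "b = LS_beta L S" and "t = LS_t L S n"
  have "0 < b" using LS_beta(1)[OF L] by (simp add: b_def)
  moreover have "1 \<le> real t * b ^ n" using LS_t_mult_power_ge_1[OF L] by (simp add: b_def t_def)
  ultimately have radius_small: "b / 2 / real t < b ^ (n + 1)"
    by (simp add: divide_less_eq mult.commute mult.left_commute)
  fix l m assume "l \<in> {1..t}" "m \<in> {1..t}" "l \<noteq> m"
  then have "b ^ (n + 1) \<le> dist_int (LS_point L S l - LS_point L S m)"
    using LS_Lambda_separated[OF L, of "l - 1" n "m - 1"]
      LS_point_eq_nth_LS_Lambda[OF L, of l n] LS_point_eq_nth_LS_Lambda[OF L, of m n]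
    by (auto simp: b_def t_def)
  with radius_small show "b / 2 / real t < dist_int (LS_point L S l - LS_point L S m)" by simp
qed

theorem corollary1:
  fixes L S :: nat
  assumes "L \<ge> 1" and "L + S \<ge> 2"
  shows "\<not> poissonian_pc (LS_point L S)"
proof (rule not_poissonian_pc_if_pair_corr_vanishes)
  show "strict_mono (LS_t L S)" using strict_mono_LS_t[OF assms] .
  show "LS_beta L S / 2 > 0" using LS_beta(1)[OF assms] by simp
  show "pair_corr (LS_point L S) (LS_t L S n) (LS_beta L S / 2) = 0" for n
    using pair_corr_LS_point_LS_t[OF assms] .
qed

end
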